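(* For every $k\in\mathbb N$ and $\mu\in\{0,\dots,L-1\}$, let $Q$ be a matrix whose columns form an orthonormal basis of $\operatorname{range}(W_{k,\mu+1})$. Then $$f(v_{k,\mu+1})-f(v_{k,\mu})=-\frac{1}{2\|b\|^2}\big\langle Q(Q^TAQ)^{-1}Q^Tr_{k,\mu},\,r_{k,\mu}\big\rangle .$$
   Context: Let $\mathcal V=\bigotimes_{\nu=1}^d\mathbb R^{m_\nu}\cong\mathbb R^N$ with the Euclidean inner product $\langle\cdot,\cdot\rangle$ and norm $\|\cdot\|$. Let $A\in\mathbb R^{N\times N}$ be symmetric positive definite, $b\in\mathcal V\setminus\{0\}$, $f(v)=\frac{1}{\|b\|^2}(\frac12\langle Av,v\rangle-\langle b,v\rangle)$. Let $L\ge d$, $P_1,\dots,P_L$ finite-dimensional real inner product spaces, $P=P_1\times\dots\times P_L$, $U:P\to\mathcal V$ multilinear, $F=f\circ U$. For $\mathbf p\in P$, $W_{\mu,\mathbf p^{[\mu]}}:P_\mu\to\mathcal V$ is $q\mapsto U(p_1,\dots,p_{\mu-1},q,p_{\mu+1},\dots,p_L)$; $X^T$ transpose, $X^+$ pseudoinverse (w.r.t. orthonormal bases). ALS: choose $\mathbf p_1=(p_1^1,\dots,p_L^1)\in P$; for $k=1,2,\dots$ and $\mu=1,\dots,L$ in order, $W_{k,\mu}:=W_{\mu,(p_1^{k+1},\dots,p_{\mu-1}^{k+1},p_{\mu+1}^k,\dots,p_L^k)}$ and $p_\mu^{k+1}:=(W_{k,\mu}^TAW_{k,\mu})^+W_{k,\mu}^Tb$.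 For $\mu\in\{0,\dots,L\}$ put $v_{k,\mu}=U(p_1^{k+1},\dots,p_\mu^{k+1},p_{\mu+1}^k,\dots,p_L^k)$ and $r_{k,\mu}=b-Av_{k,\mu}$. *)

theory Defs
  imports "Jordan_Normal_Form.Matrix"
begin

definition pinv_mat :: "real mat \<Rightarrow> real mat" where
  "pinv_mat M = (THE X. X \<in> carrier_mat (dim_col M) (dim_row M) \<and>
      M * X * M = M \<and> X * M * X = X \<and>
      transpose_mat (M * X) = M * X \<and> transpose_mat (X * M) = X * M)"

definition inv_mat :: "real mat \<Rightarrow> real mat" where
  "inv_mat M = (THE X. X \<in> carrier_mat (dim_row M) (dim_row M) \<and>
      M * X = 1\<^sub>m (dim_row M) \<and> X * M = 1\<^sub>m (dim_row M))"

definition spd :: "nat \<Rightarrow> real mat \<Rightarrow> bool" where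
  "spd N A \<longleftrightarrow> A \<in> carrier_mat N N \<and> transpose_mat A = A \<and>
     (\<forall>v \<in> carrier_vec N. v \<noteq> 0\<^sub>v N \<longrightarrow> v \<bullet> (A *\<^sub>v v) > 0)"

text \<open>U : P_1 x ... x P_L \<rightarrow> R^N is multilinear, where P_j = R^(n j) and a point of P
  is a function p with p j \<in> carrier_vec (n j) for j \<in> {1..L}.\<close>
definition multilinear_map ::
  "nat \<Rightarrow> (nat \<Rightarrow> nat) \<Rightarrow> nat \<Rightarrow> ((nat \<Rightarrow> real vec) \<Rightarrow> real vec) \<Rightarrow> bool" where
  "multilinear_map L n N U \<longleftrightarrow>
     (\<forall>p. (\<forall>j\<in>{1..L}. p j \<in> carrier_vec (n j)) \<longrightarrow> U p \<in> carrier_vec N) \<and>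
     (\<forall>p mu. (\<forall>j\<in>{1..L}. p j \<in> carrier_vec (n j)) \<longrightarrow> mu \<in> {1..L} \<longrightarrow>
        (\<forall>x \<in> carrier_vec (n mu). \<forall>y \<in> carrier_vec (n mu). \<forall>a b :: real.
           U (p(mu := a \<cdot>\<^sub>v x + b \<cdot>\<^sub>v y)) = a \<cdot>\<^sub>v U (p(mu := x)) + b \<cdot>\<^sub>v U (p(mu := y))))"

definition W_map :: "((nat \<Rightarrow> real vec) \<Rightarrow> real vec) \<Rightarrow> (nat \<Rightarrow> real vec) \<Rightarrow> nat \<Rightarrow> real vec \<Rightarrow> real vec" where
  "W_map U p mu q = U (p(mu := q))"

definition W_mat :: "((nat \<Rightarrow> real vec) \<Rightarrow> real vec) \<Rightarrow> (nat \<Rightarrow> nat) \<Rightarrow> nat \<Rightarrow>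
    (nat \<Rightarrow> real vec) \<Rightarrow> nat \<Rightarrow> real mat" where
  "W_mat U n N p mu = mat N (n mu) (\<lambda>(i, j). W_map U p mu (unit_vec (n mu) j) $ i)"

definition als_update :: "real mat \<Rightarrow> real vec \<Rightarrow> ((nat \<Rightarrow> real vec) \<Rightarrow> real vec) \<Rightarrow>
    (nat \<Rightarrow> nat) \<Rightarrow> nat \<Rightarrow> (nat \<Rightarrow> real vec) \<Rightarrow> nat \<Rightarrow> (nat \<Rightarrow> real vec)" where
  "als_update A b U n N p mu =
     (let W = W_mat U n N p mu
      in p(mu := pinv_mat (transpose_mat W * A * W) *\<^sub>v (transpose_mat W *\<^sub>v b)))"

primrec als_part :: "real mat \<Rightarrow> real vec \<Rightarrow> ((nat \<Rightarrow> real vec) \<Rightarrow> real vec) \<Rightarrow>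
    (nat \<Rightarrow> nat) \<Rightarrow> nat \<Rightarrow> (nat \<Rightarrow> real vec) \<Rightarrow> nat \<Rightarrow> (nat \<Rightarrow> real vec)" where
  "als_part A b U n N p0 0 = p0"
| "als_part A b U n N p0 (Suc mu) = als_update A b U n N (als_part A b U n N p0 mu) (Suc mu)"

text \<open>als_start ... p1 k = the iterate p_k (paper indexing, k \<ge> 1; p_1 is the initial point).\<close>
fun als_start :: "real mat \<Rightarrow> real vec \<Rightarrow> ((nat \<Rightarrow> real vec) \<Rightarrow> real vec) \<Rightarrow>
    (nat \<Rightarrow> nat) \<Rightarrow> nat \<Rightarrow> nat \<Rightarrow> (nat \<Rightarrow> real vec) \<Rightarrow> nat \<Rightarrow> (nat \<Rightarrow> real vec)" where
  "als_start A b U n N L p1 0 = p1"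
| "als_start A b U n N L p1 (Suc 0) = p1"
| "als_start A b U n N L p1 (Suc (Suc k)) = als_part A b U n N (als_start A b U n N L p1 (Suc k)) L"

text \<open>The tuple (p_1^{k+1},...,p_mu^{k+1},p_{mu+1}^k,...,p_L^k), so v_{k,mu} = U of it.\<close>
definition als_state :: "real mat \<Rightarrow> real vec \<Rightarrow> ((nat \<Rightarrow> real vec) \<Rightarrow> real vec) \<Rightarrow>
    (nat \<Rightarrow> nat) \<Rightarrow> nat \<Rightarrow> nat \<Rightarrow> (nat \<Rightarrow> real vec) \<Rightarrow> nat \<Rightarrow> nat \<Rightarrow> (nat \<Rightarrow> real vec)" where
  "als_state A b U n N L p1 k mu = als_part A b U n N (als_start A b U n N L p1 k) mu"

definition f_obj :: "real mat \<Rightarrow> real vec \<Rightarrow> real vec \<Rightarrow> real" where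
  "f_obj A b v = (1 / (b \<bullet> b)) * ((1/2) * ((A *\<^sub>v v) \<bullet> v) - b \<bullet> v)"

end

theory Submission
  imports Defs "Jordan_Normal_Form.Determinant"
begin

(*
  Write v = v_{k,mu} and W = W_{k,mu+1}. By multilinearity v lies in range W, and the ALS
  update is v_{k,mu+1} = W (W^T A W)^+ W^T b. If B has a left inverse and the same range as W,
  then W = B C with C of full row rank, and the Penrose conditions identify
  W (W^T A W)^+ W^T with B (B^T A B)^{-1} B^T. For B = Q this says that v_{k,mu+1} = P b with
  P = Q (Q^T A Q)^{-1} Q^T, the Galerkin approximation of A^{-1} b in range Q; hence
  v_{k,mu+1} - v = P r_{k,mu}, and the new residual is orthogonal to this correction.
  Expanding the quadratic f along the correction gives the formula.
  The same identification for a basis of range W, extracted column by column, shows that the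
  pseudoinverse always has the expected dimensions, so that all iterates are well formed.
*)

lemma real_scalar_prod_self_eq_0:
  fixes v :: "real vec"
  assumes "v \<in> carrier_vec n"
  shows "v \<bullet> v = 0 \<longleftrightarrow> v = 0\<^sub>v n"
  using conjugate_square_eq_0_vec[OF assms] by simp

lemma mult_mat_vec_zero [simp]:
  "A \<in> carrier_mat nr nc \<Longrightarrow> A *\<^sub>v 0\<^sub>v nc = (0\<^sub>v nr :: 'a :: semiring_0 vec)"
  by (intro eq_vecI) auto

lemma mat_eq_vecI:
  fixes A B :: "'a :: comm_ring_1 mat"
  assumes A: "A \<in> carrier_mat nr nc" and B: "B \<in> carrier_mat nr nc"
    and eq: "\<And>v. v \<in> carrier_vec nc \<Longrightarrow> A *\<^sub>v v = B *\<^sub>v v"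
  shows "A = B"
proof (rule eq_matI)
  fix i j assume i: "i < dim_row B" and j: "j < dim_col B"
  have "(A *\<^sub>v unit_vec nc j) $ i = (B *\<^sub>v unit_vec nc j) $ i" using eq by simp
  then show "A $$ (i,j) = B $$ (i,j)" using A B i j by simp
qed (use A B in auto)

lemma assoc_mult_mat_dim:
  fixes A B C :: "'a :: semiring_0 mat"
  assumes "dim_col A = dim_row B" and "dim_col B = dim_row C"
  shows "A * B * C = A * (B * C)"
  using assms by (intro assoc_mult_mat[of A "dim_row A" "dim_col A" B "dim_col B" C "dim_col C"]) auto

lemma assoc_mult3_mat_vec:
  fixes B C D :: "'a :: comm_semiring_1 mat"
  assumes "B \<in> carrier_mat n1 n2" and "C \<in> carrier_mat n2 n3" and "D \<in> carrier_mat n3 n4"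
    and "v \<in> carrier_vec n4"
  shows "(B * C * D) *\<^sub>v v = B *\<^sub>v (C *\<^sub>v (D *\<^sub>v v))"
proof -
  have "(B * C * D) *\<^sub>v v = (B * C) *\<^sub>v (D *\<^sub>v v)"
    using assms by (intro assoc_mult_mat_vec) auto
  also have "\<dots> = B *\<^sub>v (C *\<^sub>v (D *\<^sub>v v))"
    using assms by (intro assoc_mult_mat_vec) auto
  finally show ?thesis .
qed

lemma inv_mat_eqI:
  fixes G H :: "real mat"
  assumes G: "G \<in> carrier_mat n n" and H: "H \<in> carrier_mat n n"
    and GH: "G * H = 1\<^sub>m n" and HG: "H * G = 1\<^sub>m n"
  shows "inv_mat G = H"
  unfolding inv_mat_def
proof (rule the_equality)
  fix X assume "X \<in> carrier_mat (dim_row G) (dim_row G) \<and> G * X = 1\<^sub>m (dim_row G) \<and> X * G = 1\<^sub>m (dim_row G)"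
  then have X: "X \<in> carrier_mat n n" and XG: "X * G = 1\<^sub>m n" using G by auto
  have "X = X * (G * H)" using GH X by simp
  also have "\<dots> = H" using XG X G H by (simp flip: assoc_mult_mat)
  finally show "X = H" .
qed (use assms in auto)

lemma quadratic_form_congruence:
  fixes A B :: "'a :: comm_ring_1 mat"
  assumes A: "A \<in> carrier_mat N N" and B: "B \<in> carrier_mat N r" and z: "z \<in> carrier_vec r"
  shows "z \<bullet> ((transpose_mat B * A * B) *\<^sub>v z) = (B *\<^sub>v z) \<bullet> (A *\<^sub>v (B *\<^sub>v z))"
proof -
  have Bt: "transpose_mat B \<in> carrier_mat r N" using B by simp
  have "z \<bullet> ((transpose_mat B * A * B) *\<^sub>v z) = (transpose_mat B *\<^sub>v (A *\<^sub>v (B *\<^sub>v z))) \<bullet> z"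
    unfolding assoc_mult3_mat_vec[OF Bt A B z] using A B z by (simp add: comm_scalar_prod[of _ r])
  also have "\<dots> = (A *\<^sub>v (B *\<^sub>v z)) \<bullet> (B *\<^sub>v z)"
    using A B z by (simp add: transpose_vec_mult_scalar)
  finally show ?thesis using A B z by (simp add: comm_scalar_prod[of _ N])
qed

lemma spd_one_mat: "spd n (1\<^sub>m n)"
proof -
  have "v \<bullet> v > 0" if "v \<in> carrier_vec n" "v \<noteq> 0\<^sub>v n" for v :: "real vec"
    using conjugate_square_greater_0_vec[OF that(1)] that(2) by simp
  then show ?thesis unfolding spd_def by simp
qed

lemma inv_mat_congruence:
  assumes A: "spd N A" and B: "B \<in> carrier_mat N r"
    and inj: "\<And>x. x \<in> carrier_vec r \<Longrightarrow> B *\<^sub>v x = 0\<^sub>v N \<Longrightarrow> x = 0\<^sub>v r"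
  defines "G \<equiv> transpose_mat B * A * B"
  shows "inv_mat G \<in> carrier_mat r r" and "G * inv_mat G = 1\<^sub>m r" and "inv_mat G * G = 1\<^sub>m r"
proof -
  have Ac: "A \<in> carrier_mat N N"
    and pos: "\<And>v. v \<in> carrier_vec N \<Longrightarrow> v \<noteq> 0\<^sub>v N \<Longrightarrow> v \<bullet> (A *\<^sub>v v) > 0"
    using A unfolding spd_def by auto
  have G: "G \<in> carrier_mat r r" using Ac B unfolding G_def by simp
  have "z = 0\<^sub>v r" if z: "z \<in> carrier_vec r" and Gz: "G *\<^sub>v z = 0\<^sub>v r" for z
  proof -
    have "(B *\<^sub>v z) \<bullet> (A *\<^sub>v (B *\<^sub>v z)) = 0"
      using quadratic_form_congruence[OF Ac B z] Gz z unfolding G_def by simp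
    then have "B *\<^sub>v z = 0\<^sub>v N" using pos[of "B *\<^sub>v z"] B z by force
    then show ?thesis using inj z by blast
  qed
  then have "det G \<noteq> 0" using det_0_iff_vec_prod_zero_field[OF G] by blast
  then obtain H where H: "H \<in> carrier_mat r r" "G * H = 1\<^sub>m r" "H * G = 1\<^sub>m r"
    using det_non_zero_imp_unit[OF G, of "()"] unfolding Units_def ring_mat_def by auto
  moreover have "inv_mat G = H" using inv_mat_eqI[OF G H] .
  ultimately show "inv_mat G \<in> carrier_mat r r" "G * inv_mat G = 1\<^sub>m r" "inv_mat G * G = 1\<^sub>m r"
    by simp_all
qed

lemma inv_mat_symmetric:
  fixes G :: "real mat"
  assumes G: "G \<in> carrier_mat n n" and G_sym: "transpose_mat G = G"
    and H: "inv_mat G \<in> carrier_mat n n" "G * inv_mat G = 1\<^sub>m n" "inv_mat G * G = 1\<^sub>m n"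
  shows "transpose_mat (inv_mat G) = inv_mat G"
proof -
  have "G * transpose_mat (inv_mat G) = 1\<^sub>m n"
    using arg_cong[OF H(3), of transpose_mat] transpose_mult[OF H(1) G] G_sym by simp
  moreover have "transpose_mat (inv_mat G) * G = 1\<^sub>m n"
    using arg_cong[OF H(2), of transpose_mat] transpose_mult[OF G H(1)] G_sym by simp
  moreover have "transpose_mat (inv_mat G) \<in> carrier_mat n n" using H(1) by simp
  ultimately show ?thesis using inv_mat_eqI[OF G] by metis
qed

lemma right_inverse_symmetric:
  fixes C :: "real mat"
  assumes C: "C \<in> carrier_mat r c"
    and inj: "\<And>z. z \<in> carrier_vec r \<Longrightarrow> transpose_mat C *\<^sub>v z = 0\<^sub>v c \<Longrightarrow> z = 0\<^sub>v r"
  obtains R where "R \<in> carrier_mat c r" "C * R = 1\<^sub>m r" "transpose_mat (R * C) = R * C"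
proof -
  have Ct: "transpose_mat C \<in> carrier_mat c r" using C by simp
  have K: "transpose_mat (transpose_mat C) * 1\<^sub>m c * transpose_mat C = C * transpose_mat C"
    using C by simp
  define S where "S = inv_mat (C * transpose_mat C)"
  have S: "S \<in> carrier_mat r r" "C * transpose_mat C * S = 1\<^sub>m r" "S * (C * transpose_mat C) = 1\<^sub>m r"
    using inv_mat_congruence[OF spd_one_mat Ct inj] unfolding K S_def by simp_all
  have "transpose_mat (C * transpose_mat C) = C * transpose_mat C"
    using transpose_mult[OF C Ct] by simp
  then have S_sym: "transpose_mat S = S"
    using inv_mat_symmetric[of "C * transpose_mat C" r] S C unfolding S_def by simp
  show ?thesis
  proof
    show "transpose_mat C * S \<in> carrier_mat c r" using C S by simp
    show "C * (transpose_mat C * S) = 1\<^sub>m r" using S(2) assoc_mult_mat[OF C Ct S(1)] by simp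
    have "transpose_mat (transpose_mat C * S * C) = transpose_mat C * transpose_mat (transpose_mat C * S)"
      using transpose_mult[OF mult_carrier_mat[OF Ct S(1)] C] by simp
    also have "\<dots> = transpose_mat C * S * C"
      using transpose_mult[OF Ct S(1)] S_sym assoc_mult_mat[OF Ct S(1) C] by simp
    finally show "transpose_mat (transpose_mat C * S * C) = transpose_mat C * S * C" .
  qed
qed

lemma pinv_mat_eqI:
  fixes M X :: "real mat"
  assumes M: "M \<in> carrier_mat n n" and X: "X \<in> carrier_mat n n"
    and MXM: "M * X * M = M" and XMX: "X * M * X = X"
    and MX: "transpose_mat (M * X) = M * X" and XM: "transpose_mat (X * M) = X * M"
  shows "pinv_mat M = X"
  unfolding pinv_mat_def
proof (rule the_equality)
  fix Y assume "Y \<in> carrier_mat (dim_col M) (dim_row M) \<and> M * Y * M = M \<and> Y * M * Y = Y \<and>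
      transpose_mat (M * Y) = M * Y \<and> transpose_mat (Y * M) = Y * M"
  then have Y: "Y \<in> carrier_mat n n" and MYM: "M * Y * M = M" and YMY: "Y * M * Y = Y"
    and MY: "transpose_mat (M * Y) = M * Y" and YM: "transpose_mat (Y * M) = Y * M" using M by auto
  have [simp]: "P * R \<in> carrier_mat n n" if "P \<in> carrier_mat n n" "R \<in> carrier_mat n n" for P R :: "real mat"
    using that by simp
  have assoc: "P * R * S = P * (R * S)"
    if "P \<in> carrier_mat n n" "R \<in> carrier_mat n n" "S \<in> carrier_mat n n" for P R S :: "real mat"
    using that by (rule assoc_mult_mat)
  have tr: "transpose_mat (P * R) = transpose_mat R * transpose_mat P"
    if "P \<in> carrier_mat n n" "R \<in> carrier_mat n n" for P R :: "real mat"
    using that by (rule transpose_mult)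
  have "X = X * transpose_mat (M * X)"
    using XMX MX by (simp add: assoc X M)
  also have "\<dots> = X * transpose_mat X * transpose_mat (M * Y * M)"
    by (simp add: MYM tr assoc X M)
  also have "\<dots> = X * transpose_mat (M * X) * transpose_mat (M * Y)"
    by (simp add: tr assoc M X Y)
  also have "\<dots> = X * M * Y"
    unfolding MX MY using XMX by (simp add: assoc M X Y)
  finally have X_eq: "X = X * M * Y" .
  have "Y = transpose_mat (Y * M) * Y"
    using YMY YM by simp
  also have "\<dots> = transpose_mat (M * X * M) * transpose_mat Y * Y"
    by (simp add: MXM tr assoc M Y)
  also have "\<dots> = transpose_mat (X * M) * transpose_mat (Y * M) * Y"
    by (simp add: tr assoc M X Y)
  also have "\<dots> = X * M * Y"
    unfolding XM YM using YMY by (simp add: assoc M X Y)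
  finally show "Y = X" using X_eq by simp
qed (use assms in auto)

lemma pinv_mat_congruence:
  fixes G H C R :: "real mat"
  assumes G: "G \<in> carrier_mat r r" and H: "H \<in> carrier_mat r r"
    and GH: "G * H = 1\<^sub>m r" and HG: "H * G = 1\<^sub>m r"
    and C: "C \<in> carrier_mat r c" and R: "R \<in> carrier_mat c r"
    and CR: "C * R = 1\<^sub>m r" and RC_sym: "transpose_mat (R * C) = R * C"
  shows "pinv_mat (transpose_mat C * G * C) = R * H * transpose_mat R"
proof (rule pinv_mat_eqI)
  note dims = carrier_matD[OF G] carrier_matD[OF H] carrier_matD[OF C] carrier_matD[OF R]
  have RC_sym': "transpose_mat C * transpose_mat R = R * C"
    using RC_sym transpose_mult[OF R C] by simp
  have RtCt: "transpose_mat R * transpose_mat C = 1\<^sub>m r"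
    using arg_cong[OF CR, of transpose_mat] transpose_mult[OF C R] by simp
  have cancel_CR: "C * (R * Z) = Z" if "dim_row Z = r" for Z
    using CR that dims by (simp flip: assoc_mult_mat_dim)
  have cancel_RtCt: "transpose_mat R * (transpose_mat C * Z) = Z" if "dim_row Z = r" for Z
    using RtCt that dims by (simp flip: assoc_mult_mat_dim)
  have cancel_GH: "G * (H * Z) = Z" if "dim_row Z = r" for Z
    using GH that dims by (simp flip: assoc_mult_mat_dim)
  have cancel_HG: "H * (G * Z) = Z" if "dim_row Z = r" for Z
    using HG that dims by (simp flip: assoc_mult_mat_dim)
  note cancel = cancel_CR cancel_RtCt cancel_GH cancel_HG
  let ?M = "transpose_mat C * G * C" and ?X = "R * H * transpose_mat R"
  have MX: "?M * ?X = R * C"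
    using dims RC_sym' by (simp add: assoc_mult_mat_dim cancel)
  have XM: "?X * ?M = R * C"
    using dims by (simp add: assoc_mult_mat_dim cancel)
  show "?M \<in> carrier_mat c c" "?X \<in> carrier_mat c c" using G H C R by auto
  show "?M * ?X * ?M = ?M"
    unfolding MX RC_sym'[symmetric] using dims by (simp add: assoc_mult_mat_dim cancel)
  show "?X * ?M * ?X = ?X"
    unfolding XM using dims by (simp add: assoc_mult_mat_dim cancel)
  show "transpose_mat (?M * ?X) = ?M * ?X" "transpose_mat (?X * ?M) = ?X * ?M"
    unfolding MX XM by (fact RC_sym)+
qed

definition mat_range :: "'a :: semiring_0 mat \<Rightarrow> 'a vec set" where
  "mat_range M = (\<lambda>x. M *\<^sub>v x) ` carrier_vec (dim_col M)"

lemma mat_range_iff: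
  "M \<in> carrier_mat nr nc \<Longrightarrow> v \<in> mat_range M \<longleftrightarrow> (\<exists>x \<in> carrier_vec nc. v = M *\<^sub>v x)"
  unfolding mat_range_def by auto

lemma mat_range_left_inverse_factor:
  fixes W B L :: "real mat"
  assumes W: "W \<in> carrier_mat N c"
    and B: "B \<in> carrier_mat N r" and L: "L \<in> carrier_mat r N" and LB: "L * B = 1\<^sub>m r"
    and range: "mat_range B = mat_range W"
  shows "B * (L * W) = W"
    and "\<And>z. z \<in> carrier_vec r \<Longrightarrow> transpose_mat (L * W) *\<^sub>v z = 0\<^sub>v c \<Longrightarrow> z = 0\<^sub>v r"
proof -
  have LBx: "L *\<^sub>v (B *\<^sub>v x) = x" if "x \<in> carrier_vec r" for x
    using LB that L B by (simp flip: assoc_mult_mat_vec)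
  have C: "L * W \<in> carrier_mat r c" using L W by simp
  have C_mult: "(L * W) *\<^sub>v y = L *\<^sub>v (W *\<^sub>v y)" if "y \<in> carrier_vec c" for y
    using L W that by simp
  show "B * (L * W) = W"
  proof (rule mat_eq_vecI[of _ N c])
    fix y :: "real vec" assume y: "y \<in> carrier_vec c"
    then have "W *\<^sub>v y \<in> mat_range B" unfolding range using W by (auto simp: mat_range_iff)
    then obtain x where x: "x \<in> carrier_vec r" "W *\<^sub>v y = B *\<^sub>v x" using B by (auto simp: mat_range_iff)
    show "(B * (L * W)) *\<^sub>v y = W *\<^sub>v y" using B C y x LBx C_mult by simp
  qed (use B C W in auto)
  fix z assume z: "z \<in> carrier_vec r" and Ctz: "transpose_mat (L * W) *\<^sub>v z = 0\<^sub>v c"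
  have "B *\<^sub>v z \<in> mat_range W" unfolding range[symmetric] using B z by (auto simp: mat_range_iff)
  then obtain y where y: "y \<in> carrier_vec c" "B *\<^sub>v z = W *\<^sub>v y" using W by (auto simp: mat_range_iff)
  have "z \<bullet> z = z \<bullet> ((L * W) *\<^sub>v y)" using C_mult[OF y(1)] LBx[OF z] y(2) by simp
  also have "\<dots> = (transpose_mat (L * W) *\<^sub>v z) \<bullet> y" using transpose_vec_mult_scalar[OF C y(1) z] by simp
  finally show "z = 0\<^sub>v r" using Ctz y z real_scalar_prod_self_eq_0 by simp
qed

lemma left_inverse_injective:
  fixes B L :: "real mat"
  assumes L: "L \<in> carrier_mat r N" and B: "B \<in> carrier_mat N r" and LB: "L * B = 1\<^sub>m r"
    and x: "x \<in> carrier_vec r" and Bx: "B *\<^sub>v x = 0\<^sub>v N"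
  shows "x = 0\<^sub>v r"
proof -
  have "x = (L * B) *\<^sub>v x" using LB x by simp
  also have "\<dots> = L *\<^sub>v (B *\<^sub>v x)" using L B x by (intro assoc_mult_mat_vec) auto
  finally show ?thesis using Bx L by simp
qed

lemma pinv_mat_range_basis:
  fixes A W B L :: "real mat"
  assumes A: "spd N A" and W: "W \<in> carrier_mat N c"
    and B: "B \<in> carrier_mat N r" and L: "L \<in> carrier_mat r N" and LB: "L * B = 1\<^sub>m r"
    and range: "mat_range B = mat_range W"
  shows "pinv_mat (transpose_mat W * A * W) \<in> carrier_mat c c"
    and "W * pinv_mat (transpose_mat W * A * W) * transpose_mat W
         = B * inv_mat (transpose_mat B * A * B) * transpose_mat B"
proof -
  have Ac: "A \<in> carrier_mat N N" using A unfolding spd_def by simp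
  define C where "C = L * W"
  have C: "C \<in> carrier_mat r c" using L W unfolding C_def by simp
  note factor = mat_range_left_inverse_factor[OF W B L LB range, folded C_def]
  obtain R where R: "R \<in> carrier_mat c r" "C * R = 1\<^sub>m r" "transpose_mat (R * C) = R * C"
    using right_inverse_symmetric[OF C factor(2)] by blast
  note B_inj = left_inverse_injective[OF L B LB]
  define G where "G = transpose_mat B * A * B"
  have G: "G \<in> carrier_mat r r" using B Ac unfolding G_def by simp
  note H = inv_mat_congruence[OF A B B_inj, folded G_def]
  have M: "transpose_mat W * A * W = transpose_mat C * G * C"
    unfolding factor(1)[symmetric] G_def using B C Ac
    by (simp add: transpose_mult[OF B C] assoc_mult_mat_dim)
  have pinv: "pinv_mat (transpose_mat W * A * W) = R * inv_mat G * transpose_mat R"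
    unfolding M by (rule pinv_mat_congruence[OF G H C R])
  show "pinv_mat (transpose_mat W * A * W) \<in> carrier_mat c c"
    unfolding pinv using R H by simp
  have RtCt: "transpose_mat R * transpose_mat C = 1\<^sub>m r"
    using arg_cong[OF R(2), of transpose_mat] transpose_mult[OF C R(1)] by simp
  note dims = carrier_matD[OF B] carrier_matD[OF C] carrier_matD[OF R(1)] carrier_matD[OF H(1)]
  have "W * pinv_mat (transpose_mat W * A * W) * transpose_mat W
      = B * (C * (R * (inv_mat G * (transpose_mat R * (transpose_mat C * transpose_mat B)))))"
    unfolding pinv unfolding factor(1)[symmetric] transpose_mult[OF B C]
    using dims by (simp add: assoc_mult_mat_dim)
  also have "\<dots> = B * inv_mat G * transpose_mat B"
    using R(2) RtCt dims by (simp flip: assoc_mult_mat_dim)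
  finally show "W * pinv_mat (transpose_mat W * A * W) * transpose_mat W = B * inv_mat G * transpose_mat B" .
qed

definition append_col :: "'a mat \<Rightarrow> 'a vec \<Rightarrow> 'a mat" where
  "append_col M e = mat (dim_row M) (Suc (dim_col M)) (\<lambda>(i, j). if j < dim_col M then M $$ (i, j) else e $ i)"

lemma append_col_carrier: "M \<in> carrier_mat N k \<Longrightarrow> append_col M e \<in> carrier_mat N (Suc k)"
  unfolding append_col_def by auto

lemma append_col_mult_vec:
  fixes M :: "'a :: comm_semiring_1 mat"
  assumes M: "M \<in> carrier_mat N k" and e: "e \<in> carrier_vec N" and y: "y \<in> carrier_vec (Suc k)"
  shows "append_col M e *\<^sub>v y = M *\<^sub>v vec k (\<lambda>j. y $ j) + y $ k \<cdot>\<^sub>v e"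
proof (rule eq_vecI)
  fix i assume "i < dim_vec (M *\<^sub>v vec k (\<lambda>j. y $ j) + y $ k \<cdot>\<^sub>v e)"
  then have i: "i < N" using e by simp
  have "(append_col M e *\<^sub>v y) $ i = (\<Sum>j<Suc k. (if j < k then M $$ (i, j) else e $ i) * y $ j)"
    using M y i unfolding append_col_def by (simp add: scalar_prod_def atLeast0LessThan)
  also have "\<dots> = (\<Sum>j<k. M $$ (i, j) * y $ j) + e $ i * y $ k"
    by simp
  finally show "(append_col M e *\<^sub>v y) $ i = (M *\<^sub>v vec k (\<lambda>j. y $ j) + y $ k \<cdot>\<^sub>v e) $ i"
    using M e i by (simp add: scalar_prod_def atLeast0LessThan mult.commute)
qed (use M e in \<open>simp add: append_col_def\<close>)

lemma mat_range_append_col: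
  fixes M :: "'a :: comm_ring_1 mat"
  assumes M: "M \<in> carrier_mat N k" and e: "e \<in> carrier_vec N"
  shows "mat_range (append_col M e) = {u + a \<cdot>\<^sub>v e | u a. u \<in> mat_range M}"
proof (intro equalityI subsetI)
  have Me: "dim_col (append_col M e) = Suc k" using append_col_carrier[OF M] by blast
  fix v assume "v \<in> mat_range (append_col M e)"
  then obtain y where "y \<in> carrier_vec (Suc k)" "v = append_col M e *\<^sub>v y"
    unfolding mat_range_def Me by blast
  then show "v \<in> {u + a \<cdot>\<^sub>v e | u a. u \<in> mat_range M}"
    using append_col_mult_vec[OF M e] M unfolding mat_range_def by fastforce
next
  fix v assume "v \<in> {u + a \<cdot>\<^sub>v e | u a. u \<in> mat_range M}"
  then obtain x a where x: "x \<in> carrier_vec k" and v: "v = M *\<^sub>v x + a \<cdot>\<^sub>v e"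
    using M unfolding mat_range_def by auto
  define y where "y = vec (Suc k) (\<lambda>j. if j < k then x $ j else a)"
  have "vec k (\<lambda>j. y $ j) = x" using x unfolding y_def by (intro eq_vecI) auto
  then have "append_col M e *\<^sub>v y = v"
    using append_col_mult_vec[OF M e, of y] v unfolding y_def by simp
  then show "v \<in> mat_range (append_col M e)"
    using append_col_carrier[OF M, of e] unfolding mat_range_def y_def by force
qed

lemma append_col_last_col:
  assumes "W \<in> carrier_mat N (Suc c)"
  shows "W = append_col (mat N c (\<lambda>(i, j). W $$ (i, j))) (col W c)"
  using assms unfolding append_col_def by (intro eq_matI) (auto simp: less_Suc_eq)

lemma mat_range_append_col_redundant:
  fixes B :: "real mat"
  assumes B: "B \<in> carrier_mat N r" and w: "w \<in> mat_range B"
  shows "mat_range (append_col B w) = mat_range B"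
proof -
  obtain t where t: "t \<in> carrier_vec r" "w = B *\<^sub>v t" using w B by (auto simp: mat_range_iff)
  have "w \<in> carrier_vec N" using t B by simp
  note range = mat_range_append_col[OF B this]
  show ?thesis unfolding range
  proof (intro equalityI subsetI)
    fix v assume "v \<in> {u + a \<cdot>\<^sub>v w | u a. u \<in> mat_range B}"
    then obtain x a where x: "x \<in> carrier_vec r" and v: "v = B *\<^sub>v x + a \<cdot>\<^sub>v w"
      using B by (auto simp: mat_range_iff)
    have "v = B *\<^sub>v (x + a \<cdot>\<^sub>v t)"
      unfolding v using x t B by (simp add: mult_add_distrib_mat_vec mult_mat_vec)
    then show "v \<in> mat_range B" using x t B by (auto simp: mat_range_iff)
  next
    fix v assume v: "v \<in> mat_range B"
    then have "v = v + 0 \<cdot>\<^sub>v w" using t B by (auto simp: mat_range_iff)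
    then show "v \<in> {u + a \<cdot>\<^sub>v w | u a. u \<in> mat_range B}" using v by blast
  qed
qed

lemma append_col_injective:
  fixes B :: "real mat"
  assumes B: "B \<in> carrier_mat N r"
    and B_inj: "\<And>x. x \<in> carrier_vec r \<Longrightarrow> B *\<^sub>v x = 0\<^sub>v N \<Longrightarrow> x = 0\<^sub>v r"
    and w: "w \<in> carrier_vec N" and w_new: "w \<notin> mat_range B"
    and y: "y \<in> carrier_vec (Suc r)" and By: "append_col B w *\<^sub>v y = 0\<^sub>v N"
  shows "y = 0\<^sub>v (Suc r)"
proof -
  define y' where "y' = vec r (\<lambda>j. y $ j)"
  have y': "y' \<in> carrier_vec r" unfolding y'_def by simp
  have sum0: "B *\<^sub>v y' + y $ r \<cdot>\<^sub>v w = 0\<^sub>v N"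
    using By append_col_mult_vec[OF B w y] unfolding y'_def by simp
  have last: "y $ r = 0"
  proof (rule ccontr)
    assume nz: "y $ r \<noteq> 0"
    have "w = B *\<^sub>v ((- 1 / y $ r) \<cdot>\<^sub>v y')"
    proof (rule eq_vecI)
      fix i assume "i < dim_vec (B *\<^sub>v ((- 1 / y $ r) \<cdot>\<^sub>v y'))"
      then have i: "i < N" using B by simp
      have "(B *\<^sub>v y') $ i + y $ r * w $ i = 0"
        using arg_cong[OF sum0, of "\<lambda>v. v $ i"] i B w by simp
      then show "w $ i = (B *\<^sub>v ((- 1 / y $ r) \<cdot>\<^sub>v y')) $ i"
        using i nz B y' by (simp add: mult_mat_vec field_simps)
    qed (use w B in simp)
    then show False using w_new y' B by (auto simp: mat_range_iff)
  qed
  moreover have "0 \<cdot>\<^sub>v w = 0\<^sub>v N" using w by (intro eq_vecI) auto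
  ultimately have "B *\<^sub>v y' = 0\<^sub>v N" using sum0 B y' by simp
  then have y'_0: "y' = 0\<^sub>v r" using B_inj y' by blast
  have "y $ j = 0" if "j < r" for j
  proof -
    have "vec r (\<lambda>j. y $ j) $ j = 0\<^sub>v r $ j" using y'_0 unfolding y'_def by simp
    then show ?thesis using that by simp
  qed
  then show ?thesis using y last by (intro eq_vecI) (auto simp: less_Suc_eq)
qed

lemma mat_range_injective_basis:
  fixes W :: "real mat"
  assumes "W \<in> carrier_mat N c"
  shows "\<exists>r B. B \<in> carrier_mat N r \<and> (\<forall>x \<in> carrier_vec r. B *\<^sub>v x = 0\<^sub>v N \<longrightarrow> x = 0\<^sub>v r)
    \<and> mat_range B = mat_range W"
  using assms
proof (induction c arbitrary: W)
  case 0
  then show ?case by (intro exI[of _ 0] exI[of _ W]) (auto intro: eq_vecI)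
next
  case (Suc c)
  define W' where "W' = mat N c (\<lambda>(i, j). W $$ (i, j))"
  define w where "w = col W c"
  have W': "W' \<in> carrier_mat N c" unfolding W'_def by simp
  have w: "w \<in> carrier_vec N" unfolding w_def using carrier_matD(1)[OF Suc.prems] by (intro carrier_vecI) simp
  obtain r B where B: "B \<in> carrier_mat N r" and B_inj: "\<forall>x \<in> carrier_vec r. B *\<^sub>v x = 0\<^sub>v N \<longrightarrow> x = 0\<^sub>v r"
    and range: "mat_range B = mat_range W'"
    using Suc.IH[OF W'] by blast
  have range_W: "mat_range W = mat_range (append_col B w)"
    using append_col_last_col[OF Suc.prems] mat_range_append_col[OF W' w] mat_range_append_col[OF B w]
    unfolding W'_def[symmetric] w_def[symmetric] range by simp
  show ?case
  proof (cases "w \<in> mat_range B")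
    case True
    then show ?thesis using B B_inj range_W mat_range_append_col_redundant[OF B] by metis
  next
    case False
    then show ?thesis
      using append_col_carrier[OF B] append_col_injective[OF B _ w False] B_inj range_W by metis
  qed
qed

lemma injective_left_inverse:
  fixes B :: "real mat"
  assumes B: "B \<in> carrier_mat N r"
    and inj: "\<And>x. x \<in> carrier_vec r \<Longrightarrow> B *\<^sub>v x = 0\<^sub>v N \<Longrightarrow> x = 0\<^sub>v r"
  obtains L where "L \<in> carrier_mat r N" and "L * B = 1\<^sub>m r"
proof -
  have G: "transpose_mat B * 1\<^sub>m N * B = transpose_mat B * B" using B by simp
  note H = inv_mat_congruence[OF spd_one_mat B inj, unfolded G]
  show ?thesis
  proof
    show "inv_mat (transpose_mat B * B) * transpose_mat B \<in> carrier_mat r N" using H(1) B by simp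
    show "inv_mat (transpose_mat B * B) * transpose_mat B * B = 1\<^sub>m r"
      using H(1,3) B assoc_mult_mat[of _ r r "transpose_mat B" N B r] by simp
  qed
qed

lemma pinv_mat_gram_carrier:
  assumes A: "spd N A" and W: "W \<in> carrier_mat N c"
  shows "pinv_mat (transpose_mat W * A * W) \<in> carrier_mat c c"
proof -
  obtain r B where B: "B \<in> carrier_mat N r" "\<forall>x \<in> carrier_vec r. B *\<^sub>v x = 0\<^sub>v N \<longrightarrow> x = 0\<^sub>v r"
    and range: "mat_range B = mat_range W"
    using mat_range_injective_basis[OF W] by blast
  obtain L where "L \<in> carrier_mat r N" "L * B = 1\<^sub>m r"
    using injective_left_inverse[OF B(1)] B(2) by blast
  then show ?thesis using pinv_mat_range_basis(1)[OF A W B(1) _ _ range] by blast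
qed

definition tuple_carrier :: "nat \<Rightarrow> (nat \<Rightarrow> nat) \<Rightarrow> (nat \<Rightarrow> real vec) set" where
  "tuple_carrier L n = {p. \<forall>j\<in>{1..L}. p j \<in> carrier_vec (n j)}"

lemma W_mat_carrier: "W_mat U n N p mu \<in> carrier_mat N (n mu)"
  unfolding W_mat_def by simp

lemma als_update_tuple_carrier:
  assumes "spd N A" and "p \<in> tuple_carrier L n"
  shows "als_update A b U n N p mu \<in> tuple_carrier L n"
proof -
  have "pinv_mat (transpose_mat (W_mat U n N p mu) * A * W_mat U n N p mu) \<in> carrier_mat (n mu) (n mu)"
    by (rule pinv_mat_gram_carrier[OF assms(1) W_mat_carrier])
  then show ?thesis using assms(2) unfolding tuple_carrier_def als_update_def Let_def
    by (auto intro: carrier_vecI)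
qed

lemma als_state_tuple_carrier:
  assumes A: "spd N A" and p1: "p1 \<in> tuple_carrier L n"
  shows "als_state A b U n N L p1 k mu \<in> tuple_carrier L n"
proof -
  have part: "als_part A b U n N p0 m \<in> tuple_carrier L n" if "p0 \<in> tuple_carrier L n" for p0 m
    using that by (induction m) (auto intro: als_update_tuple_carrier[OF A])
  have start: "als_start A b U n N L p1 (Suc k') \<in> tuple_carrier L n" for k'
    by (induction k') (simp_all add: p1 part)
  have "als_start A b U n N L p1 k \<in> tuple_carrier L n"
    using start p1 by (cases k) simp_all
  then show ?thesis unfolding als_state_def by (rule part)
qed

lemma linear_map_eq_mat_mult_vec:
  fixes f :: "'a :: comm_ring_1 vec \<Rightarrow> 'a vec"
  assumes car: "\<And>x. x \<in> carrier_vec m \<Longrightarrow> f x \<in> carrier_vec N"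
    and lin: "\<And>x y a c. x \<in> carrier_vec m \<Longrightarrow> y \<in> carrier_vec m \<Longrightarrow>
      f (a \<cdot>\<^sub>v x + c \<cdot>\<^sub>v y) = a \<cdot>\<^sub>v f x + c \<cdot>\<^sub>v f y"
    and q: "q \<in> carrier_vec m"
  shows "f q = mat N m (\<lambda>(i, j). f (unit_vec m j) $ i) *\<^sub>v q"
proof -
  define s where "s k = vec m (\<lambda>i. if i < k then q $ i else 0)" for k
  have s: "s k \<in> carrier_vec m" for k unfolding s_def by simp
  have partial: "f (s k) = vec N (\<lambda>i. \<Sum>j<k. f (unit_vec m j) $ i * q $ j)" if "k \<le> m" for k
    using that
  proof (induction k)
    case 0
    have "s 0 = 0 \<cdot>\<^sub>v s 0 + 0 \<cdot>\<^sub>v s 0" unfolding s_def by (intro eq_vecI) auto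
    then have zero: "f (s 0) = 0 \<cdot>\<^sub>v f (s 0) + 0 \<cdot>\<^sub>v f (s 0)" using lin[OF s s] by metis
    show ?case
    proof (rule eq_vecI)
      fix i assume "i < dim_vec (vec N (\<lambda>i. \<Sum>j<0. f (unit_vec m j) $ i * q $ j))"
      then show "f (s 0) $ i = vec N (\<lambda>i. \<Sum>j<0. f (unit_vec m j) $ i * q $ j) $ i"
        using arg_cong[OF zero, of "\<lambda>v. v $ i"] carrier_vecD[OF car[OF s]] by simp
    qed (use car[OF s] in simp)
  next
    case (Suc k)
    have step: "s (Suc k) = 1 \<cdot>\<^sub>v s k + q $ k \<cdot>\<^sub>v unit_vec m k"
      unfolding s_def using Suc.prems by (intro eq_vecI) (auto simp: less_Suc_eq)
    have "f (s (Suc k)) = 1 \<cdot>\<^sub>v f (s k) + q $ k \<cdot>\<^sub>v f (unit_vec m k)"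
      unfolding step using Suc.prems by (intro lin s) simp
    then show ?case
      using Suc car[OF s] car[of "unit_vec m k"] by (intro eq_vecI) auto
  qed
  have "s m = q" unfolding s_def using q by (intro eq_vecI) auto
  then show ?thesis
    using partial[of m] q by (intro eq_vecI) (auto simp: scalar_prod_def atLeast0LessThan mult.commute)
qed

lemma U_update_eq_W_mat_mult_vec:
  assumes U: "multilinear_map L n N U" and p: "p \<in> tuple_carrier L n" and mu: "mu \<in> {1..L}"
    and q: "q \<in> carrier_vec (n mu)"
  shows "U (p(mu := q)) = W_mat U n N p mu *\<^sub>v q"
  unfolding W_mat_def W_map_def
proof (rule linear_map_eq_mat_mult_vec[of "n mu" "\<lambda>q. U (p(mu := q))" N, OF _ _ q])
  have p_upd: "p(mu := x) \<in> tuple_carrier L n" if "x \<in> carrier_vec (n mu)" for x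
    using p that unfolding tuple_carrier_def by auto
  show "U (p(mu := x)) \<in> carrier_vec N" if "x \<in> carrier_vec (n mu)" for x
    using U p_upd[OF that] unfolding multilinear_map_def tuple_carrier_def by blast
  show "U (p(mu := a \<cdot>\<^sub>v x + c \<cdot>\<^sub>v y)) = a \<cdot>\<^sub>v U (p(mu := x)) + c \<cdot>\<^sub>v U (p(mu := y))"
    if "x \<in> carrier_vec (n mu)" "y \<in> carrier_vec (n mu)" for x y a c
    using U p mu that unfolding multilinear_map_def tuple_carrier_def by blast
qed

lemma W_map_image_eq_mat_range:
  assumes U: "multilinear_map L n N U" and p: "p \<in> tuple_carrier L n" and mu: "mu \<in> {1..L}"
  shows "W_map U p mu ` carrier_vec (n mu) = mat_range (W_mat U n N p mu)"
proof -
  have "W_map U p mu q = W_mat U n N p mu *\<^sub>v q" if "q \<in> carrier_vec (n mu)" for q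
    unfolding W_map_def using U_update_eq_W_mat_mult_vec[OF U p mu that] .
  then show ?thesis unfolding mat_range_def using W_mat_carrier[of U n N p mu]
    by (intro image_cong) auto
qed

lemma U_mem_mat_range_W_mat:
  assumes U: "multilinear_map L n N U" and p: "p \<in> tuple_carrier L n" and mu: "mu \<in> {1..L}"
  shows "U p \<in> mat_range (W_mat U n N p mu)"
proof -
  have "p mu \<in> carrier_vec (n mu)" using p mu unfolding tuple_carrier_def by blast
  moreover have "U p = W_map U p mu (p mu)" unfolding W_map_def by simp
  ultimately show ?thesis unfolding W_map_image_eq_mat_range[OF assms, symmetric] by blast
qed

lemma U_als_update:
  assumes U: "multilinear_map L n N U" and p: "p \<in> tuple_carrier L n" and mu: "mu \<in> {1..L}"
    and A: "spd N A" and b: "b \<in> carrier_vec N"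
  defines "W \<equiv> W_mat U n N p mu"
  shows "U (als_update A b U n N p mu) = (W * pinv_mat (transpose_mat W * A * W) * transpose_mat W) *\<^sub>v b"
proof -
  have W: "W \<in> carrier_mat N (n mu)" unfolding W_def by (rule W_mat_carrier)
  note X = pinv_mat_gram_carrier[OF A W]
  have "U (als_update A b U n N p mu) = W *\<^sub>v (pinv_mat (transpose_mat W * A * W) *\<^sub>v (transpose_mat W *\<^sub>v b))"
    unfolding als_update_def Let_def W_def[symmetric]
    using X by (intro U_update_eq_W_mat_mult_vec[OF U p mu, folded W_def]) (auto intro: carrier_vecI)
  also have "\<dots> = (W * pinv_mat (transpose_mat W * A * W) * transpose_mat W) *\<^sub>v b"
    using W X b by (intro assoc_mult3_mat_vec[symmetric]) auto
  finally show ?thesis .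
qed

lemma f_obj_diff_orthogonal_residual:
  fixes A :: "real mat"
  assumes A: "A \<in> carrier_mat N N" and A_sym: "transpose_mat A = A"
    and v: "v \<in> carrier_vec N" and d: "d \<in> carrier_vec N" and b: "b \<in> carrier_vec N"
    and orth: "(A *\<^sub>v (v + d) - b) \<bullet> d = 0"
  shows "f_obj A b (v + d) - f_obj A b v = - (1 / (2 * (b \<bullet> b))) * (d \<bullet> (b - A *\<^sub>v v))"
proof -
  have Av: "A *\<^sub>v v \<in> carrier_vec N" and Ad: "A *\<^sub>v d \<in> carrier_vec N" using A v d by auto
  have sym: "(A *\<^sub>v d) \<bullet> v = (A *\<^sub>v v) \<bullet> d"
    using transpose_vec_mult_scalar[OF A v d] A_sym comm_scalar_prod[OF d Av] by simp
  have A_add: "A *\<^sub>v (v + d) = A *\<^sub>v v + A *\<^sub>v d" using A v d by (simp add: mult_add_distrib_mat_vec)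
  have quad: "(A *\<^sub>v (v + d)) \<bullet> (v + d) = (A *\<^sub>v v) \<bullet> v + 2 * ((A *\<^sub>v v) \<bullet> d) + (A *\<^sub>v d) \<bullet> d"
    unfolding A_add using Av Ad v d sym
    by (simp add: scalar_prod_add_distrib[of _ N] add_scalar_prod_distrib[of _ N])
  have lin: "b \<bullet> (v + d) = b \<bullet> v + b \<bullet> d" using b v d by (simp add: scalar_prod_add_distrib[of _ N])
  have orth': "(A *\<^sub>v v) \<bullet> d + (A *\<^sub>v d) \<bullet> d = b \<bullet> d"
    using orth unfolding A_add using Av Ad b d
    by (simp add: minus_scalar_prod_distrib[of _ N] add_scalar_prod_distrib[of _ N])
  have res: "d \<bullet> (b - A *\<^sub>v v) = b \<bullet> d - (A *\<^sub>v v) \<bullet> d"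
    using Av b d by (simp add: scalar_prod_minus_distrib[of _ N] comm_scalar_prod[of _ N])
  have "(1 / 2) * ((A *\<^sub>v (v + d)) \<bullet> (v + d)) - b \<bullet> (v + d) - ((1 / 2) * ((A *\<^sub>v v) \<bullet> v) - b \<bullet> v)
      = - (1 / 2) * (d \<bullet> (b - A *\<^sub>v v))"
    unfolding quad lin res using orth' by (simp add: algebra_simps)
  then show ?thesis unfolding f_obj_def right_diff_distrib[symmetric] by simp
qed

lemma galerkin_projection_mult_vec:
  fixes A Q :: "real mat"
  assumes A: "spd N A" and Q: "Q \<in> carrier_mat N r"
    and Q_inj: "\<And>x. x \<in> carrier_vec r \<Longrightarrow> Q *\<^sub>v x = 0\<^sub>v N \<Longrightarrow> x = 0\<^sub>v r"
    and x: "x \<in> carrier_vec N"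
  obtains z where "z \<in> carrier_vec r"
    and "(Q * inv_mat (transpose_mat Q * A * Q) * transpose_mat Q) *\<^sub>v x = Q *\<^sub>v z"
    and "transpose_mat Q *\<^sub>v (A *\<^sub>v (Q *\<^sub>v z)) = transpose_mat Q *\<^sub>v x"
proof
  have Ac: "A \<in> carrier_mat N N" using A unfolding spd_def by simp
  define G where "G = transpose_mat Q * A * Q"
  note H = inv_mat_congruence[OF A Q Q_inj, folded G_def]
  have Qt: "transpose_mat Q \<in> carrier_mat r N" using Q by simp
  show z: "inv_mat G *\<^sub>v (transpose_mat Q *\<^sub>v x) \<in> carrier_vec r" using H(1) Q x by simp
  show "(Q * inv_mat G * transpose_mat Q) *\<^sub>v x = Q *\<^sub>v (inv_mat G *\<^sub>v (transpose_mat Q *\<^sub>v x))"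
    using assoc_mult3_mat_vec[OF Q H(1) Qt x] .
  have "G \<in> carrier_mat r r" using Ac Q unfolding G_def by simp
  then have "G *\<^sub>v (inv_mat G *\<^sub>v w) = w" if "w \<in> carrier_vec r" for w
    using H that by (simp flip: assoc_mult_mat_vec)
  then have "G *\<^sub>v (inv_mat G *\<^sub>v (transpose_mat Q *\<^sub>v x)) = transpose_mat Q *\<^sub>v x"
    using Qt x by simp
  then show "transpose_mat Q *\<^sub>v (A *\<^sub>v (Q *\<^sub>v (inv_mat G *\<^sub>v (transpose_mat Q *\<^sub>v x))))
      = transpose_mat Q *\<^sub>v x"
    unfolding G_def assoc_mult3_mat_vec[OF Qt Ac Q z[unfolded G_def]] .
qed

lemma galerkin_projection_fixes_range:
  fixes A Q :: "real mat"
  assumes A: "spd N A" and Q: "Q \<in> carrier_mat N r"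
    and Q_inj: "\<And>x. x \<in> carrier_vec r \<Longrightarrow> Q *\<^sub>v x = 0\<^sub>v N \<Longrightarrow> x = 0\<^sub>v r"
    and y: "y \<in> carrier_vec r"
  shows "(Q * inv_mat (transpose_mat Q * A * Q) * transpose_mat Q) *\<^sub>v (A *\<^sub>v (Q *\<^sub>v y)) = Q *\<^sub>v y"
proof -
  have Ac: "A \<in> carrier_mat N N" using A unfolding spd_def by simp
  define G where "G = transpose_mat Q * A * Q"
  note H = inv_mat_congruence[OF A Q Q_inj, folded G_def]
  have Qt: "transpose_mat Q \<in> carrier_mat r N" using Q by simp
  have "transpose_mat Q *\<^sub>v (A *\<^sub>v (Q *\<^sub>v y)) = G *\<^sub>v y"
    unfolding G_def by (rule assoc_mult3_mat_vec[OF Qt Ac Q y, symmetric])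
  moreover have "G \<in> carrier_mat r r" using Ac Q unfolding G_def by simp
  then have "inv_mat G *\<^sub>v (G *\<^sub>v y) = y"
    using H y by (simp flip: assoc_mult_mat_vec)
  ultimately show ?thesis
    using assoc_mult3_mat_vec[OF Q H(1) Qt, of "A *\<^sub>v (Q *\<^sub>v y)"] Ac Q y unfolding G_def by simp
qed

lemma f_obj_galerkin_step:
  fixes A Q :: "real mat"
  assumes A: "spd N A" and b: "b \<in> carrier_vec N" and Q: "Q \<in> carrier_mat N r"
    and Q_inj: "\<And>x. x \<in> carrier_vec r \<Longrightarrow> Q *\<^sub>v x = 0\<^sub>v N \<Longrightarrow> x = 0\<^sub>v r"
    and y: "y \<in> carrier_vec r"
  defines "P \<equiv> Q * inv_mat (transpose_mat Q * A * Q) * transpose_mat Q"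
  shows "f_obj A b (P *\<^sub>v b) - f_obj A b (Q *\<^sub>v y)
    = - (1 / (2 * (b \<bullet> b))) * ((P *\<^sub>v (b - A *\<^sub>v (Q *\<^sub>v y))) \<bullet> (b - A *\<^sub>v (Q *\<^sub>v y)))"
proof -
  have Ac: "A \<in> carrier_mat N N" and A_sym: "transpose_mat A = A" using A unfolding spd_def by auto
  have P: "P \<in> carrier_mat N N"
    using inv_mat_congruence(1)[OF A Q Q_inj] Q unfolding P_def by simp
  obtain z where z: "z \<in> carrier_vec r" and Pb: "P *\<^sub>v b = Q *\<^sub>v z"
    and galerkin: "transpose_mat Q *\<^sub>v (A *\<^sub>v (Q *\<^sub>v z)) = transpose_mat Q *\<^sub>v b"
    using galerkin_projection_mult_vec[OF A Q Q_inj b] unfolding P_def by blast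
  define d where "d = Q *\<^sub>v (z - y)"
  have d: "d \<in> carrier_vec N" using Q z y unfolding d_def by simp
  have d_eq: "d = Q *\<^sub>v z - Q *\<^sub>v y" using Q z y unfolding d_def by (simp add: mult_minus_distrib_mat_vec)
  have Pr: "P *\<^sub>v (b - A *\<^sub>v (Q *\<^sub>v y)) = d"
    using galerkin_projection_fixes_range[OF A Q Q_inj y, folded P_def] P Pb Ac Q b y d_eq
    by (simp add: mult_minus_distrib_mat_vec)
  have split: "Q *\<^sub>v z = Q *\<^sub>v y + d" using d_eq Q z y by (intro eq_vecI) auto
  have "(A *\<^sub>v (Q *\<^sub>v z) - b) \<bullet> d = (transpose_mat Q *\<^sub>v (A *\<^sub>v (Q *\<^sub>v z) - b)) \<bullet> (z - y)"
    unfolding d_def using Q Ac b z y by (intro transpose_vec_mult_scalar[symmetric]) auto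
  also have "transpose_mat Q *\<^sub>v (A *\<^sub>v (Q *\<^sub>v z) - b) = 0\<^sub>v r"
    using galerkin Q Ac b z by (simp add: mult_minus_distrib_mat_vec)
  finally have orth: "(A *\<^sub>v (Q *\<^sub>v y + d) - b) \<bullet> d = 0" using z y unfolding split by simp
  show ?thesis
    using f_obj_diff_orthogonal_residual[OF Ac A_sym _ d b orth] Q y
    unfolding Pb Pr split by simp
qed

theorem mainTheorem7:
  fixes d :: nat and m :: "nat \<Rightarrow> nat" and N L :: nat and n :: "nat \<Rightarrow> nat"
    and A :: "real mat" and b :: "real vec"
    and U :: "(nat \<Rightarrow> real vec) \<Rightarrow> real vec" and p1 :: "nat \<Rightarrow> real vec"
    and k mu r :: nat and Q :: "real mat"
  assumes N_def: "N = (\<Prod>\<nu>\<in>{1..d}. m \<nu>)"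
    and L_ge: "L \<ge> d"
    and A_spd: "spd N A"
    and b_dim: "b \<in> carrier_vec N" and b_nz: "b \<noteq> 0\<^sub>v N"
    and U_ml: "multilinear_map L n N U"
    and p1_dim: "\<forall>j\<in>{1..L}. p1 j \<in> carrier_vec (n j)"
    and k_ge: "k \<ge> 1"
    and mu_lt: "mu < L"
    and Q_dim: "Q \<in> carrier_mat N r"
    and Q_orth: "\<forall>i<r. \<forall>j<r. col Q i \<bullet> col Q j = (if i = j then 1 else 0)"
    and Q_span: "{Q *\<^sub>v x | x. x \<in> carrier_vec r} =
       W_map U (als_state A b U n N L p1 k mu) (Suc mu) ` carrier_vec (n (Suc mu))"
  shows "f_obj A b (U (als_state A b U n N L p1 k (Suc mu))) - f_obj A b (U (als_state A b U n N L p1 k mu))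
     = - (1 / (2 * (b \<bullet> b))) *
        ((Q * inv_mat (transpose_mat Q * A * Q) * transpose_mat Q *\<^sub>v
            (b - A *\<^sub>v U (als_state A b U n N L p1 k mu))) \<bullet>
          (b - A *\<^sub>v U (als_state A b U n N L p1 k mu)))"
proof -
  define p where "p = als_state A b U n N L p1 k mu"
  define W where "W = W_mat U n N p (Suc mu)"
  have mu: "Suc mu \<in> {1..L}" using mu_lt by simp
  have p: "p \<in> tuple_carrier L n"
    unfolding p_def by (rule als_state_tuple_carrier[OF A_spd]) (use p1_dim in \<open>simp add: tuple_carrier_def\<close>)
  have W: "W \<in> carrier_mat N (n (Suc mu))" unfolding W_def by (rule W_mat_carrier)
  have QtQ: "transpose_mat Q * Q = 1\<^sub>m r" using Q_dim Q_orth by (intro eq_matI) auto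
  have Qt: "transpose_mat Q \<in> carrier_mat r N" using Q_dim by simp
  have range: "mat_range Q = mat_range W"
    using Q_span Q_dim unfolding W_def p_def[symmetric] W_map_image_eq_mat_range[OF U_ml p mu, symmetric]
    by (simp add: mat_range_def Setcompr_eq_image)
  obtain y where y: "y \<in> carrier_vec r" "U p = Q *\<^sub>v y"
    using U_mem_mat_range_W_mat[OF U_ml p mu] Q_dim unfolding W_def[symmetric] range[symmetric]
    by (auto simp: mat_range_iff)
  have "U (als_state A b U n N L p1 k (Suc mu))
      = (W * pinv_mat (transpose_mat W * A * W) * transpose_mat W) *\<^sub>v b"
    unfolding W_def p_def als_state_def als_part.simps
    by (rule U_als_update[OF U_ml p[unfolded p_def als_state_def] mu A_spd b_dim])
  also have "\<dots> = (Q * inv_mat (transpose_mat Q * A * Q) * transpose_mat Q) *\<^sub>v b"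
    using pinv_mat_range_basis(2)[OF A_spd W Q_dim Qt QtQ range] by simp
  finally show ?thesis
    using f_obj_galerkin_step[OF A_spd b_dim Q_dim left_inverse_injective[OF Qt Q_dim QtQ] y(1)]
    unfolding p_def[symmetric] y(2) by simp
qed

end
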